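(* Let $a,b\in\mathbb{R}^n$ with $a\ll b$ and let $X=[a,b]=\{z\in\mathbb{R}^n: a\le z\le b\}$. Let $\{B_i\}_{i\in\mathbb{N}}$ be a sequence of experiments in $X$ (as in the context) and let $\succeq^*$ be a continuous preference on $X$. Then for each $k\in\mathbb{N}$ there exists a continuous preference $\succeq_k$ on $X$ that strongly rationalizes the choice function of order $k$ generated by $\succeq^*$, such that $\succeq_k\to X\times X$ (the relation of complete indifference) in the topology of closed convergence.
   Context: For $x,y\in\mathbb{R}^n$, $x\ge y$ means $x_i\ge y_i$ for all $i$ and $x\gg y$ means $x_i>y_i$ for all $i$. A preference on $X$ is a complete and transitive binary relation $\succeq\subseteq X\times X$; it is continuous if it is a closed subset of $X\times X$. A sequence of experiments is a sequence $\{B_i\}_{i\in\mathbb{N}}$ of unordered pairs $B_i=\{x_i,y_i\}\subseteq X$ such that $B=\bigcup_i B_i$ is dense in $X$ and for all $x,y\in B$ there is $k$ with $B_k=\{x,y\}$; set $\Sigma_k=\{B_1,\dots,B_k\}$. For a preference $\succeq$ and a finite set $A$, $c_{\succeq}(A)=\{x\in A: x\succeq y \text{ for all } y\in A\}$. The choice function of order $k$ generated by $\succeq^*$ is the map $B_i\mapsto c_{\succeq^*}(B_i)$ on $\Sigma_k$. A preference $\succeq_k$ strongly rationalizes a choice function $c$ on $\Sigma_k$ if $c(B_i)=c_{\succeq_k}(B_i)$ for all $B_i\in\Sigma_k$. Topology of closed convergence on closed subsets of $X\times X$: for a sequence $\mathcal{F}=\{F^n\}$ of closed sets, $\mathrm{Li}(\mathcal{F})$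 is the set of $(x,y)$ such that every neighborhood $V$ of $(x,y)$ meets $F^n$ for all sufficiently large $n$, and $\mathrm{Ls}(\mathcal{F})$ is the set of $(x,y)$ such that every neighborhood $V$ of $(x,y)$ meets $F^n$ for infinitely many $n$; $F^n\to F$ iff $\mathrm{Li}(\mathcal{F})=F=\mathrm{Ls}(\mathcal{F})$. *)

theory Defs
  imports "HOL-Analysis.Analysis"
begin

definition box_cc :: "real^'n \<Rightarrow> real^'n \<Rightarrow> (real^'n) set" where
  "box_cc a b = {z. \<forall>i. a $ i \<le> z $ i \<and> z $ i \<le> b $ i}"

definition preference :: "'a set \<Rightarrow> ('a \<times> 'a) set \<Rightarrow> bool" where
  "preference X R \<longleftrightarrow> R \<subseteq> X \<times> X
     \<and> (\<forall>x\<in>X. \<forall>y\<in>X. (x, y) \<in> R \<or> (y, x) \<in> R)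
     \<and> trans R"

definition continuous_pref :: "'a::topological_space set \<Rightarrow> ('a \<times> 'a) set \<Rightarrow> bool" where
  "continuous_pref X R \<longleftrightarrow> preference X R \<and> closedin (top_of_set (X \<times> X)) R"

definition experiments :: "'a::topological_space set \<Rightarrow> (nat \<Rightarrow> 'a set) \<Rightarrow> bool" where
  "experiments X B \<longleftrightarrow>
     (\<forall>i. \<exists>x y. B i = {x, y} \<and> x \<in> X \<and> y \<in> X)
     \<and> X \<subseteq> closure (\<Union>(range B))
     \<and> (\<forall>x\<in>\<Union>(range B). \<forall>y\<in>\<Union>(range B). \<exists>k. B k = {x, y})"

definition choice :: "('a \<times> 'a) set \<Rightarrow> 'a set \<Rightarrow> 'a set" where
  "choice R A = {x \<in> A. \<forall>y\<in>A. (x, y) \<in> R}"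

text \<open>R strongly rationalizes the choice function of order k generated by S,
  where Sigma_k consists of the first k experiments B 0, ..., B (k-1).\<close>
definition strongly_rationalizes :: "('a \<times> 'a) set \<Rightarrow> nat \<Rightarrow> (nat \<Rightarrow> 'a set) \<Rightarrow> ('a \<times> 'a) set \<Rightarrow> bool" where
  "strongly_rationalizes R k B S \<longleftrightarrow> (\<forall>i<k. choice R (B i) = choice S (B i))"

definition Li :: "(nat \<Rightarrow> 'a::topological_space set) \<Rightarrow> 'a set" where
  "Li F = {p. \<forall>V. open V \<and> p \<in> V \<longrightarrow> (\<forall>\<^sub>F n in sequentially. F n \<inter> V \<noteq> {})}"

definition Ls :: "(nat \<Rightarrow> 'a::topological_space set) \<Rightarrow> 'a set" where
  "Ls F = {p. \<forall>V. open V \<and> p \<in> V \<longrightarrow> (\<exists>\<^sub>F n in sequentially. F n \<inter> V \<noteq> {})}"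

definition closed_converges :: "(nat \<Rightarrow> 'a::topological_space set) \<Rightarrow> 'a set \<Rightarrow> bool" where
  "closed_converges F A \<longleftrightarrow> Li F = A \<and> Ls F = A"

end

theory Submission
  imports Defs
begin

(* Rank the points of the first k experiments by the number of such points they are weakly
   preferred to.  A continuous utility interpolates these ranks and gives the top value to a
   finite 1/(k+1)-net avoiding the experiments, so every point lies within 1/(k+1) of a best
   element.  Hence the k-th preference contains pairs arbitrarily close to every pair of
   X x X, which forces closed convergence to complete indifference. *)

lemma finite_net_avoiding_finite:
  fixes X :: "'a::metric_space set"
  assumes "compact X" "\<forall>c\<in>X. c islimpt X" "finite F" "d > 0"
  obtains G where "finite G" "G \<subseteq> X - F" "\<forall>x\<in>X. \<exists>g\<in>G. dist x g < d"
proof -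
  have "X \<subseteq> (\<Union>g\<in>X - F. ball g d)"
  proof
    fix x assume "x \<in> X"
    then have "infinite (X \<inter> ball x d)"
      using assms(2,4) islimpt_eq_infinite_ball by blast
    then have "\<not> X \<inter> ball x d \<subseteq> F"
      using assms(3) finite_subset by blast
    then obtain g where "g \<in> X \<inter> ball x d" "g \<notin> F"
      by blast
    then show "x \<in> (\<Union>g\<in>X - F. ball g d)"
      by (auto simp: dist_commute)
  qed
  then obtain G where "G \<subseteq> X - F" "finite G" "X \<subseteq> (\<Union>g\<in>G. ball g d)"
    by (rule compactE_image[OF assms(1) open_ball])
  then show thesis
    using that by (force simp: dist_commute)
qed

lemma continuous_interpolation_finite:
  fixes H :: "'a::metric_space set" and v :: "'a \<Rightarrow> real"
  assumes "finite H"
  obtains w where "continuous_on UNIV w" "\<forall>p\<in>H. w p = v p"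
proof
  \<comment> \<open>Lagrange interpolation, with distances in place of linear factors\<close>
  define w where "w z = (\<Sum>p\<in>H. v p * (\<Prod>q\<in>H - {p}. dist z q / dist p q))" for z
  show "continuous_on UNIV w"
    unfolding w_def by (intro continuous_intros) auto
  show "\<forall>p\<in>H. w p = v p"
  proof
    fix p assume p: "p \<in> H"
    have "(\<Prod>q\<in>H - {p'}. dist p q / dist p' q) = 0" if "p' \<in> H - {p}" for p'
      using that p assms by (intro prod_zero bexI[of _ p]) auto
    then have "w p = v p * (\<Prod>q\<in>H - {p}. dist p q / dist p q)"
      unfolding w_def sum.remove[OF assms p] by simp
    also have "\<dots> = v p"
      by (subst prod.neutral) auto
    finally show "w p = v p" .
  qed
qed

definition utility_pref :: "'a set \<Rightarrow> ('a \<Rightarrow> real) \<Rightarrow> ('a \<times> 'a) set" where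
  "utility_pref X w = {(x, y). x \<in> X \<and> y \<in> X \<and> w y \<le> w x}"

lemma continuous_pref_utility_pref:
  assumes "continuous_on X w"
  shows "continuous_pref X (utility_pref X w)"
proof -
  have "preference X (utility_pref X w)"
    unfolding preference_def utility_pref_def by (auto intro: transI)
  moreover have "utility_pref X w = (X \<times> X) \<inter> (\<lambda>p. w (snd p) - w (fst p)) -` {..0}"
    unfolding utility_pref_def by auto
  moreover have "continuous_on (X \<times> X) (\<lambda>p. w (snd p) - w (fst p))"
    by (intro continuous_intros continuous_on_compose2[OF assms]) auto
  then have "closedin (top_of_set (X \<times> X)) ((X \<times> X) \<inter> (\<lambda>p. w (snd p) - w (fst p)) -` {..0})"
    by (rule continuous_closedin_preimage) simp
  ultimately show ?thesis
    unfolding continuous_pref_def by simp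
qed

lemma pref_iff_card_lower_contour_le:
  assumes "preference X S" "finite F" "F \<subseteq> X" "x \<in> F" "y \<in> F"
  shows "(x, y) \<in> S \<longleftrightarrow> card {q\<in>F. (y, q) \<in> S} \<le> card {q\<in>F. (x, q) \<in> S}"
proof
  have complete: "\<forall>x\<in>X. \<forall>y\<in>X. (x, y) \<in> S \<or> (y, x) \<in> S" and "trans S"
    using assms(1) unfolding preference_def by auto
  then have lower_contour_mono: "{q\<in>F. (y', q) \<in> S} \<subseteq> {q\<in>F. (x', q) \<in> S}"
    if "(x', y') \<in> S" for x' y'
    using that by (auto dest: transD)
  show "(x, y) \<in> S \<Longrightarrow> card {q\<in>F. (y, q) \<in> S} \<le> card {q\<in>F. (x, q) \<in> S}"
    using lower_contour_mono assms(2) by (simp add: card_mono)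
  assume card_le: "card {q\<in>F. (y, q) \<in> S} \<le> card {q\<in>F. (x, q) \<in> S}"
  show "(x, y) \<in> S"
  proof (rule ccontr)
    assume "(x, y) \<notin> S"
    then have "(y, x) \<in> S" "(y, y) \<in> S"
      using complete assms(3-5) by blast+
    then have "{q\<in>F. (x, q) \<in> S} \<subseteq> {q\<in>F. (y, q) \<in> S}"
      and "y \<in> {q\<in>F. (y, q) \<in> S} - {q\<in>F. (x, q) \<in> S}"
      using lower_contour_mono \<open>(x, y) \<notin> S\<close> assms(5) by auto
    then have "{q\<in>F. (x, q) \<in> S} \<subset> {q\<in>F. (y, q) \<in> S}"
      by blast
    then have "card {q\<in>F. (x, q) \<in> S} < card {q\<in>F. (y, q) \<in> S}"
      by (rule psubset_card_mono[rotated]) (use assms(2) in simp)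
    with card_le show False
      by simp
  qed
qed

lemma continuous_pref_agreeing_on_finite:
  fixes X :: "'a::metric_space set"
  assumes "compact X" "\<forall>c\<in>X. c islimpt X" "finite F" "F \<subseteq> X" "d > 0"
    and "preference X S"
  obtains R where "continuous_pref X R" "\<forall>x\<in>F. \<forall>y\<in>F. (x, y) \<in> R \<longleftrightarrow> (x, y) \<in> S"
    "\<forall>x\<in>X. \<forall>y\<in>X. \<exists>x'\<in>X. dist x x' < d \<and> (x', y) \<in> R"
proof -
  obtain G where G: "finite G" "G \<subseteq> X - F" "\<forall>x\<in>X. \<exists>g\<in>G. dist x g < d"
    using finite_net_avoiding_finite[OF assms(1,2,3,5)] .
  define u where "u p = real (card {q\<in>F. (p, q) \<in> S})" for p
  define M where "M = real (card F)"
  have u_le_M: "u p \<le> M" for p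
    unfolding u_def M_def using assms(3) by (simp add: card_mono)
  obtain w where w: "continuous_on UNIV w" "\<forall>p\<in>F \<union> G. w p = (if p \<in> F then u p else M)"
    using continuous_interpolation_finite[of "F \<union> G" "\<lambda>p. if p \<in> F then u p else M"]
      assms(3) G(1) by blast
  define R where "R = utility_pref X (\<lambda>z. min M (w z))"
  show thesis
  proof (rule that)
    show "continuous_pref X R"
      unfolding R_def
      by (intro continuous_pref_utility_pref continuous_intros continuous_on_subset[OF w(1)]) auto
    show "\<forall>x\<in>F. \<forall>y\<in>F. (x, y) \<in> R \<longleftrightarrow> (x, y) \<in> S"
    proof (intro ballI)
      fix x y assume xy: "x \<in> F" "y \<in> F"
      then have "min M (w x) = u x" "min M (w y) = u y"
        using w(2) u_le_M by (simp_all add: min_absorb2)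
      then show "(x, y) \<in> R \<longleftrightarrow> (x, y) \<in> S"
        using xy assms(4) pref_iff_card_lower_contour_le[OF assms(6,3,4) xy]
        by (auto simp: R_def utility_pref_def u_def)
    qed
    show "\<forall>x\<in>X. \<forall>y\<in>X. \<exists>x'\<in>X. dist x x' < d \<and> (x', y) \<in> R"
    proof (intro ballI)
      fix x y assume "x \<in> X" "y \<in> X"
      then obtain g where g: "g \<in> G" "dist x g < d"
        using G(3) by blast
      then have "g \<in> X" "min M (w g) = M"
        using G(2) w(2) by auto
      with g \<open>y \<in> X\<close> show "\<exists>x'\<in>X. dist x x' < d \<and> (x', y) \<in> R"
        by (auto simp: R_def utility_pref_def)
    qed
  qed
qed

lemma closed_convergesI:
  fixes F :: "nat \<Rightarrow> 'a::metric_space set"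
  assumes "closed A" "\<And>n. F n \<subseteq> A"
    and "\<And>p e. p \<in> A \<Longrightarrow> e > 0 \<Longrightarrow> \<forall>\<^sub>F n in sequentially. \<exists>q\<in>F n. dist p q < e"
  shows "closed_converges F A"
proof -
  have "A \<subseteq> Li F"
  proof (unfold Li_def, safe)
    fix p V assume "p \<in> A" "open V" "p \<in> V"
    then obtain e where "e > 0" "ball p e \<subseteq> V"
      using open_contains_ball by blast
    with assms(3)[OF \<open>p \<in> A\<close> \<open>e > 0\<close>] show "\<forall>\<^sub>F n in sequentially. F n \<inter> V \<noteq> {}"
      by (auto elim!: eventually_mono)
  qed
  moreover have "Li F \<subseteq> Ls F"
    unfolding Li_def Ls_def by (auto intro: eventually_frequently)
  moreover have "Ls F \<subseteq> A"
  proof (rule subsetI, rule ccontr)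
    fix p assume "p \<in> Ls F" "p \<notin> A"
    moreover have "open (- A)"
      using assms(1) by (simp add: open_Compl)
    ultimately have "\<exists>\<^sub>F n in sequentially. F n \<inter> - A \<noteq> {}"
      unfolding Ls_def by blast
    moreover have "F n \<inter> - A = {}" for n
      using assms(2) by blast
    ultimately show False
      by simp
  qed
  ultimately show ?thesis
    unfolding closed_converges_def by blast
qed

lemma closed_converges_to_indifference:
  fixes X :: "'a::metric_space set"
  assumes "closed X" "\<And>n. R n \<subseteq> X \<times> X"
    and "\<And>n. \<forall>x\<in>X. \<forall>y\<in>X. \<exists>x'\<in>X. dist x x' < 1 / real (Suc n) \<and> (x', y) \<in> R n"
  shows "closed_converges R (X \<times> X)"
proof (rule closed_convergesI)
  fix p :: "'a \<times> 'a" and e :: real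
  assume "p \<in> X \<times> X" "e > 0"
  then obtain x y where p: "p = (x, y)" "x \<in> X" "y \<in> X"
    by blast
  obtain N where N: "1 / real (Suc N) < e"
    using \<open>e > 0\<close> by (rule nat_approx_posE)
  have "\<exists>q\<in>R n. dist p q < e" if "N \<le> n" for n
  proof -
    obtain x' where "dist x x' < 1 / real (Suc n)" "(x', y) \<in> R n"
      using assms(3) p by blast
    moreover have "1 / real (Suc n) \<le> 1 / real (Suc N)"
      using that by (simp add: frac_le)
    ultimately show ?thesis
      using N p by (intro bexI[of _ "(x', y)"]) (auto simp: dist_Pair_Pair)
  qed
  then show "\<forall>\<^sub>F n in sequentially. \<exists>q\<in>R n. dist p q < e"
    using eventually_sequentially by blast
qed (use assms in \<open>auto intro: closed_Times\<close>)

lemma continuous_prefs_converging_to_indifference: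
  fixes X :: "'a::metric_space set"
  assumes "compact X" "\<forall>c\<in>X. c islimpt X" "\<And>k. finite (F k)" "\<And>k. F k \<subseteq> X"
    and "preference X S"
  obtains R where "\<And>k. continuous_pref X (R k)"
    "\<And>k. \<forall>x\<in>F k. \<forall>y\<in>F k. (x, y) \<in> R k \<longleftrightarrow> (x, y) \<in> S"
    "closed_converges R (X \<times> X)"
proof -
  have "\<exists>R. continuous_pref X R \<and> (\<forall>x\<in>F k. \<forall>y\<in>F k. (x, y) \<in> R \<longleftrightarrow> (x, y) \<in> S)
      \<and> (\<forall>x\<in>X. \<forall>y\<in>X. \<exists>x'\<in>X. dist x x' < 1 / real (Suc k) \<and> (x', y) \<in> R)" for k
    by (rule continuous_pref_agreeing_on_finite[OF assms(1,2,3,4) _ assms(5)]) auto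
  then obtain R where R: "\<And>k. continuous_pref X (R k)"
      "\<And>k. \<forall>x\<in>F k. \<forall>y\<in>F k. (x, y) \<in> R k \<longleftrightarrow> (x, y) \<in> S"
      "\<And>k. \<forall>x\<in>X. \<forall>y\<in>X. \<exists>x'\<in>X. dist x x' < 1 / real (Suc k) \<and> (x', y) \<in> R k"
    by metis
  moreover have "closed_converges R (X \<times> X)"
  proof (rule closed_converges_to_indifference[OF _ _ R(3)])
    show "closed X"
      using assms(1) by (rule compact_imp_closed)
    show "R k \<subseteq> X \<times> X" for k
      using R(1) unfolding continuous_pref_def preference_def by blast
  qed
  ultimately show thesis
    using that by blast
qed

lemma box_cc_eq_cbox: "box_cc a b = cbox a b"
  unfolding box_cc_def by (simp add: interval_cart)

lemma islimpt_cbox_cart: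
  fixes a b :: "real^'n"
  assumes "\<forall>i. a $ i < b $ i" "c \<in> cbox a b"
  shows "c islimpt cbox a b"
proof (rule connected_imp_perfect[OF convex_connected[OF convex_box(1)] assms(2)])
  have "a \<in> cbox a b" "b \<in> cbox a b"
    using assms(1) unfolding interval_cart by (auto intro: less_imp_le)
  moreover have "a \<noteq> b"
    using assms(1) by (metis less_irrefl)
  ultimately show "cbox a b \<noteq> {x}" for x
    by auto
qed

lemma experiments_finite_subset:
  assumes "experiments X B"
  shows "finite (B i)" "B i \<subseteq> X"
proof -
  have "\<forall>i. \<exists>x y. B i = {x, y} \<and> x \<in> X \<and> y \<in> X"
    using assms unfolding experiments_def by (rule conjunct1)
  then obtain x y where "B i = {x, y}" "x \<in> X" "y \<in> X"
    by blast
  then show "finite (B i)" "B i \<subseteq> X"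
    by auto
qed

lemma choice_cong:
  assumes "\<forall>x\<in>A. \<forall>y\<in>A. (x, y) \<in> R \<longleftrightarrow> (x, y) \<in> S"
  shows "choice R A = choice S A"
  using assms unfolding choice_def by auto

theorem proposition1:
  fixes a b :: "real^'n" and B :: "nat \<Rightarrow> (real^'n) set"
    and S :: "((real^'n) \<times> (real^'n)) set"
  assumes "\<forall>i. a $ i < b $ i"
    and "experiments (box_cc a b) B"
    and "continuous_pref (box_cc a b) S"
  shows "\<exists>R :: nat \<Rightarrow> ((real^'n) \<times> (real^'n)) set.
           (\<forall>k. continuous_pref (box_cc a b) (R k) \<and> strongly_rationalizes (R k) k B S)
           \<and> closed_converges R (box_cc a b \<times> box_cc a b)"
proof -
  define X where "X = box_cc a b"
  define F where "F k = \<Union>(B ` {..<k})" for k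
  have X: "compact X" "\<forall>c\<in>X. c islimpt X"
    using islimpt_cbox_cart[OF assms(1)] unfolding X_def box_cc_eq_cbox by auto
  have F: "finite (F k)" "F k \<subseteq> X" for k
    using experiments_finite_subset[OF assms(2)] unfolding F_def X_def by auto
  have S: "preference X S"
    using assms(3) unfolding continuous_pref_def X_def by blast
  obtain R where R: "\<And>k. continuous_pref X (R k)"
      "\<And>k. \<forall>x\<in>F k. \<forall>y\<in>F k. (x, y) \<in> R k \<longleftrightarrow> (x, y) \<in> S"
      "closed_converges R (X \<times> X)"
    using continuous_prefs_converging_to_indifference[where F = F, OF X F S] by blast
  have "strongly_rationalizes (R k) k B S" for k
    unfolding strongly_rationalizes_def
  proof (intro allI impI choice_cong)
    fix i assume "i < k"
    then have "B i \<subseteq> F k"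
      unfolding F_def by blast
    then show "\<forall>x\<in>B i. \<forall>y\<in>B i. (x, y) \<in> R k \<longleftrightarrow> (x, y) \<in> S"
      using R(2) by blast
  qed
  then show ?thesis
    using R(1,3) unfolding X_def by blast
qed

end
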